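(* Let $\alpha>0$, $\eta=\alpha/(L+\alpha)$, $z_0\in\mathrm{dom}\, f^*$, and consider GCG: for $k\ge0$, $\bar z_k=\mathrm{argmin}_{v}\{\langle-\nabla(h^\alpha)^*(-z_k),v\rangle+f^*(v)\}$, $z_{k+1}=\eta\bar z_k+(1-\eta)z_k$. Let $S(z)=\max_{v\in\mathbb{R}^n}\{\langle-\nabla(h^\alpha)^*(-z),z-v\rangle+f^*(z)-f^*(v)\}$. Then for all $k\ge0$, $\psi^\alpha(z_{k+1})\le\psi^\alpha(z_k)-\eta S(z_k)$.
   Context: Let $\|\cdot\|$ be a norm on $\mathbb{R}^n$ with dual norm $\|\cdot\|_*$. Let $f:\mathbb{R}^n\to\mathbb{R}$ be convex, differentiable and $L$-smooth ($L>0$) with respect to $\|\cdot\|$, $h:\mathbb{R}^n\to(-\infty,\infty]$ closed proper convex with bounded domain, and $w:\mathbb{R}^n\to[0,+\infty]$ closed, $1$-strongly convex with respect to $\|\cdot\|$ on $\mathrm{dom}\, h$, with $\max_{\mathrm{dom}\, h}w<\infty$. Let $h^\alpha=h+\alpha w$ and $\psi^\alpha(z)=(h^\alpha)^*(-z)+f^*(z)$, with $^*$ the convex conjugate; $(h^\alpha)^*$ is differentiable with $(1/\alpha)$-Lipschitz gradient w.r.t. $\|\cdot\|_*$ and $f^*$ is $(1/L)$-strongly convex w.r.t. $\|\cdot\|_*$. *)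

theory Defs
  imports "HOL-Analysis.Analysis"
begin

definition is_norm :: "('a::euclidean_space \<Rightarrow> real) \<Rightarrow> bool" where
  "is_norm N \<longleftrightarrow> (\<forall>x. 0 \<le> N x) \<and> (\<forall>x. N x = 0 \<longleftrightarrow> x = 0)
     \<and> (\<forall>c x. N (c *\<^sub>R x) = \<bar>c\<bar> * N x) \<and> (\<forall>x y. N (x + y) \<le> N x + N y)"

definition dual_norm :: "('a::euclidean_space \<Rightarrow> real) \<Rightarrow> 'a \<Rightarrow> real" where
  "dual_norm N z = Sup {z \<bullet> x | x. N x \<le> 1}"

definition conj :: "('a::euclidean_space \<Rightarrow> ereal) \<Rightarrow> 'a \<Rightarrow> ereal" where
  "conj g z = (SUP x. ereal (z \<bullet> x) - g x)"

definition edom :: "('a \<Rightarrow> ereal) \<Rightarrow> 'a set" where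
  "edom g = {x. g x < \<infinity>}"

definition proper_fun :: "('a \<Rightarrow> ereal) \<Rightarrow> bool" where
  "proper_fun g \<longleftrightarrow> (\<forall>x. g x \<noteq> -\<infinity>) \<and> (\<exists>x. g x < \<infinity>)"

definition econvex :: "('a::real_vector \<Rightarrow> ereal) \<Rightarrow> bool" where
  "econvex g \<longleftrightarrow> (\<forall>x y t. 0 \<le> t \<and> t \<le> 1 \<longrightarrow>
      g (t *\<^sub>R x + (1 - t) *\<^sub>R y) \<le> ereal t * g x + ereal (1 - t) * g y)"

definition closed_fun :: "('a::euclidean_space \<Rightarrow> ereal) \<Rightarrow> bool" where
  "closed_fun g \<longleftrightarrow> closed {(x, t::real). g x \<le> ereal t}"

definition strongly_convex_on ::
  "'a set \<Rightarrow> ('a::real_vector \<Rightarrow> real) \<Rightarrow> real \<Rightarrow> ('a \<Rightarrow> ereal) \<Rightarrow> bool" where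
  "strongly_convex_on C N \<mu> g \<longleftrightarrow> (\<forall>x\<in>C. \<forall>y\<in>C. \<forall>t. 0 \<le> t \<and> t \<le> 1 \<longrightarrow>
      g (t *\<^sub>R x + (1 - t) *\<^sub>R y) \<le> ereal t * g x + ereal (1 - t) * g y
        - ereal (\<mu> / 2 * t * (1 - t) * (N (x - y))\<^sup>2))"

end

theory Submission
  imports Defs
begin

text \<open>Write \<open>\<psi>(z) = H(-z) + F(z)\<close> with \<open>H = (h\<^sup>\<alpha>)\<^sup>*\<close> and \<open>F = f\<^sup>*\<close>, and
  \<open>z' = \<eta> z\<^sub>b + (1-\<eta>) z\<close>. Since \<open>\<nabla>H\<close> is
  \<open>(1/\<alpha>)\<close>-Lipschitz, \<open>H(-z')\<close> is bounded by its linearisation at \<open>-z\<close> plus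
  \<open>\<eta>\<^sup>2/(2\<alpha>) \<parallel>z\<^sub>b - z\<parallel>\<^sub>*\<^sup>2\<close>, while the \<open>(1/L)\<close>-strong convexity of \<open>F\<close> gives
  \<open>F(z') \<le> \<eta> F(z\<^sub>b) + (1-\<eta>) F(z) - \<eta>(1-\<eta>)/(2L) \<parallel>z\<^sub>b - z\<parallel>\<^sub>*\<^sup>2\<close>. For
  \<open>\<eta> \<le> \<alpha>/(L+\<alpha>)\<close> the first quadratic term is dominated by the second, and what remains is
  \<open>\<psi>(z) - \<eta> (\<langle>-\<nabla>H(-z), z - z\<^sub>b\<rangle> + F(z) - F(z\<^sub>b))\<close>; the bracket is the gap \<open>S(z)\<close>
  because \<open>z\<^sub>b\<close> attains the maximum defining it.\<close>

lemma is_normD: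
  assumes "is_norm N"
  shows "0 \<le> N x" and "N x = 0 \<longleftrightarrow> x = 0" and "N (c *\<^sub>R x) = \<bar>c\<bar> * N x"
    and "N (x + y) \<le> N x + N y"
  using assms unfolding is_norm_def by auto

lemma is_norm_zero: "is_norm N \<Longrightarrow> N 0 = 0"
  using is_normD(2) by blast

lemma is_norm_ge_scaled_norm:
  fixes N :: "'a::euclidean_space \<Rightarrow> real"
  assumes "is_norm N"
  shows "\<exists>m>0. \<forall>x. m * norm x \<le> N x"
proof -
  note N = is_normD[OF assms]
  have "convex_on UNIV N"
  proof (rule convex_onI)
    fix x y :: 'a and t :: real
    assume "t > 0" "t < 1"
    then show "N ((1 - t) *\<^sub>R x + t *\<^sub>R y) \<le> (1 - t) * N x + t * N y"
      using N(4)[of "(1 - t) *\<^sub>R x" "t *\<^sub>R y"] N(3)[of "1 - t" x] N(3)[of t y] by simp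
  qed simp
  then have "continuous_on (sphere 0 1) N"
    using convex_on_continuous[of UNIV N] continuous_on_subset by blast
  moreover have "sphere (0::'a) 1 \<noteq> {}"
    using nonempty_Basis by (auto intro: norm_Basis)
  ultimately obtain x0 where x0: "x0 \<in> sphere 0 1" "\<And>y. y \<in> sphere 0 1 \<Longrightarrow> N x0 \<le> N y"
    using continuous_attains_inf[OF compact_sphere] by blast
  then have pos: "N x0 > 0"
    using N(1)[of x0] N(2)[of x0] by force
  have "N x0 * norm x \<le> N x" for x
  proof (cases "x = 0")
    case False
    then have "N x0 \<le> N ((1 / norm x) *\<^sub>R x)"
      by (intro x0(2)) simp
    also have "\<dots> = N x / norm x"
      using N(3) by simp
    finally show ?thesis
      using False by (simp add: field_simps)
  qed (use N(1) in simp)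
  then show ?thesis
    using pos by blast
qed

lemma bdd_above_dual_norm_set:
  fixes N :: "'a::euclidean_space \<Rightarrow> real"
  assumes "is_norm N"
  shows "bdd_above {z \<bullet> x | x. N x \<le> 1}"
proof -
  obtain m where m: "m > 0" "\<And>x. m * norm x \<le> N x"
    using is_norm_ge_scaled_norm[OF assms] by blast
  have "z \<bullet> x \<le> norm z / m" if "N x \<le> 1" for x
  proof -
    have "norm x \<le> 1 / m"
      using m(2)[of x] that m(1) by (simp add: field_simps)
    then have "norm z * norm x \<le> norm z / m"
      using mult_left_mono[of "norm x" "1 / m" "norm z"] by simp
    then show ?thesis
      using Cauchy_Schwarz_ineq2[of z x] abs_ge_self[of "z \<bullet> x"] by linarith
  qed
  then show ?thesis
    by (auto intro!: bdd_aboveI[of _ "norm z / m"])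
qed

lemma inner_le_dual_norm:
  fixes N :: "'a::euclidean_space \<Rightarrow> real"
  assumes "is_norm N" "N x \<le> 1"
  shows "z \<bullet> x \<le> dual_norm N z"
  unfolding dual_norm_def using assms by (intro cSup_upper bdd_above_dual_norm_set) auto

lemma dual_norm_nonneg:
  fixes N :: "'a::euclidean_space \<Rightarrow> real"
  assumes "is_norm N"
  shows "0 \<le> dual_norm N z"
  using inner_le_dual_norm[OF assms, of 0 z] is_norm_zero[OF assms] by simp

lemma inner_le_norm_mult_dual_norm:
  fixes N :: "'a::euclidean_space \<Rightarrow> real"
  assumes "is_norm N"
  shows "a \<bullet> d \<le> N a * dual_norm N d"
proof (cases "a = 0")
  case False
  note N = is_normD[OF assms]
  have pos: "N a > 0"
    using False N(1)[of a] N(2)[of a] by linarith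
  have "N ((1 / N a) *\<^sub>R a) \<le> 1"
    using N(3) pos by simp
  then have "d \<bullet> ((1 / N a) *\<^sub>R a) \<le> dual_norm N d"
    by (rule inner_le_dual_norm[OF assms])
  then show ?thesis
    using pos by (simp add: inner_commute field_simps)
qed (simp add: is_norm_zero[OF assms])

lemma dual_norm_scaleR_le:
  fixes N :: "'a::euclidean_space \<Rightarrow> real"
  assumes "is_norm N"
  shows "dual_norm N (c *\<^sub>R u) \<le> \<bar>c\<bar> * dual_norm N u"
  unfolding dual_norm_def[of N "c *\<^sub>R u"]
proof (rule cSup_least)
  have "c *\<^sub>R u \<bullet> 0 \<in> {c *\<^sub>R u \<bullet> x |x. N x \<le> 1}"
    by (intro CollectI exI[of _ 0]) (simp add: is_norm_zero[OF assms])
  then show "{c *\<^sub>R u \<bullet> x |x. N x \<le> 1} \<noteq> {}"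
    by blast
next
  fix r
  assume "r \<in> {c *\<^sub>R u \<bullet> x |x. N x \<le> 1}"
  then obtain x where r: "r = c * (u \<bullet> x)" and x: "N x \<le> 1"
    by auto
  have "N (sgn c *\<^sub>R x) \<le> 1"
    using x is_normD(1)[OF assms, of x] is_normD(3)[OF assms, where c = "sgn c" and x = x]
    by simp
  then have "\<bar>c\<bar> * (u \<bullet> (sgn c *\<^sub>R x)) \<le> \<bar>c\<bar> * dual_norm N u"
    by (intro mult_left_mono inner_le_dual_norm[OF assms]) simp_all
  then show "r \<le> \<bar>c\<bar> * dual_norm N u"
    using r abs_mult_sgn[of c] by (simp add: mult.assoc[symmetric])
qed

lemma dual_norm_minus:
  fixes N :: "'a::euclidean_space \<Rightarrow> real"
  assumes "is_norm N"
  shows "dual_norm N (- u) = dual_norm N u"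
  using dual_norm_scaleR_le[OF assms, of "-1" u] dual_norm_scaleR_le[OF assms, of "-1" "- u"]
  by simp

lemma inner_gradient_increment_le:
  fixes N :: "'a::euclidean_space \<Rightarrow> real"
  assumes norm: "is_norm N" and K: "K \<ge> 0" and t: "t \<ge> 0"
    and lip: "\<And>y u. N (G y - G u) \<le> K * dual_norm N (y - u)"
  shows "(G (y + t *\<^sub>R d) - G y) \<bullet> d \<le> K * t * (dual_norm N d)\<^sup>2"
proof -
  have "(G (y + t *\<^sub>R d) - G y) \<bullet> d \<le> N (G (y + t *\<^sub>R d) - G y) * dual_norm N d"
    by (rule inner_le_norm_mult_dual_norm[OF norm])
  also have "\<dots> \<le> K * (t * dual_norm N d) * dual_norm N d"
  proof (rule mult_right_mono[OF _ dual_norm_nonneg[OF norm]])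
    have "N (G (y + t *\<^sub>R d) - G y) \<le> K * dual_norm N (t *\<^sub>R d)"
      using lip[of "y + t *\<^sub>R d" y] by simp
    also have "\<dots> \<le> K * (t * dual_norm N d)"
      using mult_left_mono[OF dual_norm_scaleR_le[OF norm, of t d] K] t by simp
    finally show "N (G (y + t *\<^sub>R d) - G y) \<le> K * (t * dual_norm N d)" .
  qed
  also have "\<dots> = K * t * (dual_norm N d)\<^sup>2"
    by (simp add: power2_eq_square)
  finally show ?thesis .
qed

lemma lipschitz_gradient_upper_bound:
  fixes H :: "'a::euclidean_space \<Rightarrow> real"
  assumes norm: "is_norm N" and K: "K \<ge> 0"
    and grad: "\<And>y. (H has_derivative (\<lambda>d. G y \<bullet> d)) (at y)"
    and lip: "\<And>y u. N (G y - G u) \<le> K * dual_norm N (y - u)"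
  shows "H (y + d) \<le> H y + G y \<bullet> d + K / 2 * (dual_norm N d)\<^sup>2"
proof -
  define c where "c = K / 2 * (dual_norm N d)\<^sup>2"
  define \<phi> where "\<phi> t = H (y + t *\<^sub>R d) - t * (G y \<bullet> d) - c * t\<^sup>2" for t
  have "\<phi> 1 \<le> \<phi> 0"
  proof (rule DERIV_nonpos_imp_nonincreasing[of 0 1 \<phi>])
    fix t :: real
    assume t: "0 \<le> t" "t \<le> 1"
    have "((\<lambda>s. y + s *\<^sub>R d) has_derivative (\<lambda>s. s *\<^sub>R d)) (at t)"
      by (auto intro!: derivative_eq_intros)
    from has_derivative_compose[OF this grad]
    have "((\<lambda>s. H (y + s *\<^sub>R d)) has_real_derivative G (y + t *\<^sub>R d) \<bullet> d) (at t)"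
      by (simp add: has_field_derivative_def mult_commute_abs)
    then have "(\<phi> has_real_derivative G (y + t *\<^sub>R d) \<bullet> d - G y \<bullet> d - c * (2 * t)) (at t)"
      unfolding \<phi>_def[abs_def] by (auto intro!: derivative_eq_intros)
    moreover have "G (y + t *\<^sub>R d) \<bullet> d - G y \<bullet> d - c * (2 * t) \<le> 0"
      using inner_gradient_increment_le[OF norm K t(1) lip, of y d]
      by (simp add: inner_diff_left c_def mult_ac)
    ultimately show "\<exists>y. (\<phi> has_real_derivative y) (at t) \<and> y \<le> 0"
      by blast
  qed simp
  then show ?thesis
    unfolding \<phi>_def c_def by simp
qed

lemma lipschitz_gradient_upper_bound_scaleR:
  fixes H :: "'a::euclidean_space \<Rightarrow> real"
  assumes norm: "is_norm N" and K: "K \<ge> 0"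
    and grad: "\<And>y. (H has_derivative (\<lambda>d. G y \<bullet> d)) (at y)"
    and lip: "\<And>y u. N (G y - G u) \<le> K * dual_norm N (y - u)"
    and t: "t \<ge> 0"
  shows "H (y + t *\<^sub>R d) \<le> H y + t * (G y \<bullet> d) + K / 2 * t\<^sup>2 * (dual_norm N d)\<^sup>2"
proof -
  have "(dual_norm N (t *\<^sub>R d))\<^sup>2 \<le> (t * dual_norm N d)\<^sup>2"
    using dual_norm_scaleR_le[OF norm, of t d] t
    by (intro power_mono) (simp_all add: dual_norm_nonneg[OF norm])
  then have "K / 2 * (dual_norm N (t *\<^sub>R d))\<^sup>2 \<le> K / 2 * (t * dual_norm N d)\<^sup>2"
    by (rule mult_left_mono) (use K in simp)
  moreover have "H (y + t *\<^sub>R d) \<le> H y + t * (G y \<bullet> d) + K / 2 * (dual_norm N (t *\<^sub>R d))\<^sup>2"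
    using lipschitz_gradient_upper_bound[OF norm K grad lip, of y "t *\<^sub>R d"] by simp
  ultimately show ?thesis
    by (simp add: power_mult_distrib mult.assoc)
qed

lemma conj_real_fun_neq_minf: "conj (\<lambda>x. ereal (f x)) v \<noteq> -\<infinity>"
proof -
  have "ereal (v \<bullet> 0) - ereal (f 0) \<le> conj (\<lambda>x. ereal (f x)) v"
    unfolding conj_def by (rule SUP_upper2[of 0]) auto
  then show ?thesis
    by auto
qed

lemma SUP_gap_eq_at_argmin:
  fixes F :: "'a::real_inner \<Rightarrow> ereal"
  assumes F_nonminf: "\<And>v. F v \<noteq> -\<infinity>" and Fz: "F z = ereal a" and Fzb: "F zb = ereal b"
    and argmin: "\<And>v. ereal (g \<bullet> zb) + F zb \<le> ereal (g \<bullet> v) + F v"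
  shows "(SUP v. ereal (g \<bullet> (z - v)) + F z - F v) = ereal (g \<bullet> (z - zb) + a - b)"
proof (rule antisym)
  show "(SUP v. ereal (g \<bullet> (z - v)) + F z - F v) \<le> ereal (g \<bullet> (z - zb) + a - b)"
  proof (rule SUP_least)
    fix v
    show "ereal (g \<bullet> (z - v)) + F z - F v \<le> ereal (g \<bullet> (z - zb) + a - b)"
    proof (cases "F v")
      case (real r)
      then have "g \<bullet> zb + b \<le> g \<bullet> v + r"
        using argmin[of v] Fzb by simp
      then show ?thesis
        using Fz real by (simp add: inner_diff_right)
    qed (use F_nonminf Fz in auto)
  qed
  show "ereal (g \<bullet> (z - zb) + a - b) \<le> (SUP v. ereal (g \<bullet> (z - v)) + F z - F v)"
    by (rule SUP_upper2[of zb]) (simp_all add: Fz Fzb)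
qed

lemma step_size_quadratic_le:
  fixes \<alpha> L \<eta> :: real
  assumes "\<alpha> > 0" "L > 0" "0 \<le> \<eta>" "\<eta> \<le> \<alpha> / (L + \<alpha>)"
  shows "\<eta>\<^sup>2 / \<alpha> \<le> \<eta> * (1 - \<eta>) / L"
proof -
  have "\<eta> * L \<le> \<alpha> * (1 - \<eta>)"
    using assms by (simp add: field_simps)
  then have "\<eta> * (\<eta> * L) \<le> \<eta> * (\<alpha> * (1 - \<eta>))"
    using assms(3) by (rule mult_left_mono)
  then show ?thesis
    using assms(1,2) by (simp add: field_simps power2_eq_square)
qed

lemma lipschitz_gradient_step_bound:
  fixes N :: "'a::euclidean_space \<Rightarrow> real" and H :: "'a \<Rightarrow> real"
  assumes norm: "is_norm N" and \<alpha>: "\<alpha> > 0" and L: "L > 0"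
    and \<eta>: "0 \<le> \<eta>" "\<eta> \<le> \<alpha> / (L + \<alpha>)"
    and H_grad: "\<And>y. (H has_derivative (\<lambda>d. G y \<bullet> d)) (at y)"
    and G_lip: "\<And>y u. N (G y - G u) \<le> (1 / \<alpha>) * dual_norm N (y - u)"
  shows "H (- (\<eta> *\<^sub>R zb + (1 - \<eta>) *\<^sub>R z)) \<le> H (- z) - \<eta> * ((- G (- z)) \<bullet> (z - zb))
           + \<eta> * (1 - \<eta>) / L / 2 * (dual_norm N (zb - z))\<^sup>2"
proof -
  define D where "D = dual_norm N (zb - z)"
  have "- (\<eta> *\<^sub>R zb + (1 - \<eta>) *\<^sub>R z) = - z + \<eta> *\<^sub>R (z - zb)"
    by (simp add: algebra_simps)
  then have "H (- (\<eta> *\<^sub>R zb + (1 - \<eta>) *\<^sub>R z))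
      \<le> H (- z) + \<eta> * (G (- z) \<bullet> (z - zb)) + 1 / \<alpha> / 2 * \<eta>\<^sup>2 * D\<^sup>2"
    using lipschitz_gradient_upper_bound_scaleR[OF norm _ H_grad G_lip \<eta>(1), of "- z" "z - zb"] \<alpha>
      dual_norm_minus[OF norm, of "zb - z"]
    unfolding D_def by simp
  moreover have "1 / \<alpha> / 2 * \<eta>\<^sup>2 \<le> \<eta> * (1 - \<eta>) / L / 2"
    using divide_right_mono[OF step_size_quadratic_le[OF \<alpha> L \<eta>], of 2] by simp
  then have "1 / \<alpha> / 2 * \<eta>\<^sup>2 * D\<^sup>2 \<le> \<eta> * (1 - \<eta>) / L / 2 * D\<^sup>2"
    by (rule mult_right_mono) simp
  ultimately show ?thesis
    unfolding D_def by simp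
qed

lemma gcg_step_decrease:
  fixes N :: "'a::euclidean_space \<Rightarrow> real" and H :: "'a \<Rightarrow> real" and F :: "'a \<Rightarrow> ereal"
  assumes norm: "is_norm N" and \<alpha>: "\<alpha> > 0" and L: "L > 0"
    and \<eta>: "0 \<le> \<eta>" "\<eta> \<le> \<alpha> / (L + \<alpha>)"
    and H_grad: "\<And>y. (H has_derivative (\<lambda>d. G y \<bullet> d)) (at y)"
    and G_lip: "\<And>y u. N (G y - G u) \<le> (1 / \<alpha>) * dual_norm N (y - u)"
    and F_sc: "strongly_convex_on UNIV (dual_norm N) (1 / L) F"
    and F_nonminf: "\<And>v. F v \<noteq> -\<infinity>" and Fz: "F z \<noteq> \<infinity>"
    and argmin: "\<And>v. ereal ((- G (- z)) \<bullet> zb) + F zb \<le> ereal ((- G (- z)) \<bullet> v) + F v"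
  defines "z' \<equiv> \<eta> *\<^sub>R zb + (1 - \<eta>) *\<^sub>R z"
  shows "F z' \<noteq> \<infinity>"
    and "ereal (H (- z')) + F z' \<le> ereal (H (- z)) + F z
           - ereal \<eta> * (SUP v. ereal ((- G (- z)) \<bullet> (z - v)) + F z - F v)"
proof -
  define g where "g = - G (- z)"
  define D where "D = dual_norm N (zb - z)"
  obtain a where Fa: "F z = ereal a"
    using Fz F_nonminf[of z] by (cases "F z") auto
  then have "F zb \<noteq> \<infinity>"
    using argmin[of z] by auto
  then obtain b where Fb: "F zb = ereal b"
    using F_nonminf[of zb] by (cases "F zb") auto
  have "\<alpha> / (L + \<alpha>) \<le> 1"
    using \<alpha> L by (simp add: divide_le_eq_1)
  with \<eta>(2) have "\<eta> \<le> 1"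
    by linarith
  then have "F z' \<le> ereal \<eta> * F zb + ereal (1 - \<eta>) * F z - ereal (1 / L / 2 * \<eta> * (1 - \<eta>) * D\<^sup>2)"
    using F_sc \<eta>(1) unfolding strongly_convex_on_def z'_def D_def by auto
  then have F_step: "F z' \<le> ereal (\<eta> * b + (1 - \<eta>) * a - \<eta> * (1 - \<eta>) / L / 2 * D\<^sup>2)"
    by (simp add: Fa Fb)
  then show "F z' \<noteq> \<infinity>"
    by auto
  have "H (- z') \<le> H (- z) - \<eta> * (g \<bullet> (z - zb)) + \<eta> * (1 - \<eta>) / L / 2 * D\<^sup>2"
    unfolding z'_def g_def D_def by (rule lipschitz_gradient_step_bound[OF norm \<alpha> L \<eta> H_grad G_lip])
  then have real_step: "H (- z') + (\<eta> * b + (1 - \<eta>) * a - \<eta> * (1 - \<eta>) / L / 2 * D\<^sup>2)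
      \<le> H (- z) + a - \<eta> * (g \<bullet> (z - zb) + a - b)"
    by (simp add: algebra_simps)
  have "ereal (H (- z')) + F z' \<le> ereal (H (- z') + (\<eta> * b + (1 - \<eta>) * a - \<eta> * (1 - \<eta>) / L / 2 * D\<^sup>2))"
    using add_left_mono[OF F_step, of "ereal (H (- z'))"] by simp
  also have "\<dots> \<le> ereal (H (- z) + a - \<eta> * (g \<bullet> (z - zb) + a - b))"
    using real_step by simp
  also have "\<dots> = ereal (H (- z)) + F z - ereal \<eta> * (SUP v. ereal (g \<bullet> (z - v)) + F z - F v)"
    using SUP_gap_eq_at_argmin[OF F_nonminf Fa Fb argmin[folded g_def]] Fa by simp
  finally show "ereal (H (- z')) + F z' \<le> ereal (H (- z)) + F z
      - ereal \<eta> * (SUP v. ereal ((- G (- z)) \<bullet> (z - v)) + F z - F v)"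
    unfolding g_def .
qed

theorem lemmaB3:
  fixes N :: "'a::euclidean_space \<Rightarrow> real"
    and f :: "'a \<Rightarrow> real" and Df :: "'a \<Rightarrow> 'a"
    and h w :: "'a \<Rightarrow> ereal"
    and L \<alpha> :: real
    and G :: "'a \<Rightarrow> 'a"
    and z zb :: "nat \<Rightarrow> 'a"
  assumes norm: "is_norm N"
    and f_convex: "convex_on UNIV f"
    and f_grad: "\<And>x. (f has_derivative (\<lambda>d. Df x \<bullet> d)) (at x)"
    and L_pos: "L > 0"
    and f_smooth: "\<And>x y. dual_norm N (Df x - Df y) \<le> L * N (x - y)"
    and h_closed: "closed_fun h" and h_proper: "proper_fun h" and h_convex: "econvex h"
    and h_dom: "bounded (edom h)"
    and w_nonneg: "\<And>x. w x \<ge> 0"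
    and w_closed: "closed_fun w"
    and w_sc: "strongly_convex_on (edom h) N 1 w"
    and w_bdd: "\<exists>M::real. \<forall>x\<in>edom h. w x \<le> ereal M"
    and alpha_pos: "\<alpha> > 0"
    \<comment> \<open>standing facts from the context: (h^\<alpha>)^* is finite, differentiable with
        gradient G which is (1/\<alpha>)-Lipschitz w.r.t. the dual norm, and f^* is
        (1/L)-strongly convex w.r.t. the dual norm\<close>
    and hconj_finite: "\<And>y. \<bar>conj (\<lambda>x. h x + ereal \<alpha> * w x) y\<bar> \<noteq> \<infinity>"
    and hconj_grad: "\<And>y. ((\<lambda>u. real_of_ereal (conj (\<lambda>x. h x + ereal \<alpha> * w x) u))
                         has_derivative (\<lambda>d. G y \<bullet> d)) (at y)"
    and hconj_lip: "\<And>y u. N (G y - G u) \<le> (1 / \<alpha>) * dual_norm N (y - u)"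
    and fconj_sc: "strongly_convex_on UNIV (dual_norm N) (1 / L) (conj (\<lambda>x. ereal (f x)))"
    \<comment> \<open>GCG iteration\<close>
    and z0: "z 0 \<in> edom (conj (\<lambda>x. ereal (f x)))"
    and zb_argmin: "\<And>k v. ereal ((- G (- z k)) \<bullet> zb k) + conj (\<lambda>x. ereal (f x)) (zb k)
                       \<le> ereal ((- G (- z k)) \<bullet> v) + conj (\<lambda>x. ereal (f x)) v"
    and z_step: "\<And>k. z (Suc k) = (\<alpha> / (L + \<alpha>)) *\<^sub>R zb k + (1 - \<alpha> / (L + \<alpha>)) *\<^sub>R z k"
  shows "\<forall>k. conj (\<lambda>x. h x + ereal \<alpha> * w x) (- z (Suc k)) + conj (\<lambda>x. ereal (f x)) (z (Suc k))
           \<le> conj (\<lambda>x. h x + ereal \<alpha> * w x) (- z k) + conj (\<lambda>x. ereal (f x)) (z k)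
             - ereal (\<alpha> / (L + \<alpha>)) *
               (SUP v. ereal ((- G (- z k)) \<bullet> (z k - v)) + conj (\<lambda>x. ereal (f x)) (z k)
                        - conj (\<lambda>x. ereal (f x)) v)"
proof -
  define F where "F = conj (\<lambda>x. ereal (f x))"
  define H where "H = (\<lambda>u. real_of_ereal (conj (\<lambda>x. h x + ereal \<alpha> * w x) u))"
  have H_eq: "conj (\<lambda>x. h x + ereal \<alpha> * w x) u = ereal (H u)" for u
    unfolding H_def using hconj_finite[of u] by (simp add: ereal_real')
  have \<eta>: "0 \<le> \<alpha> / (L + \<alpha>)"
    using alpha_pos L_pos by simp
  note step = gcg_step_decrease[OF norm alpha_pos L_pos \<eta> order_refl hconj_grad[folded H_def]
      hconj_lip fconj_sc[folded F_def] conj_real_fun_neq_minf[of f, folded F_def] _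
      zb_argmin[folded F_def], folded z_step]
  have F_finite: "F (z k) \<noteq> \<infinity>" for k
  proof (induction k)
    case 0
    then show ?case
      using z0 unfolding edom_def F_def by auto
  next
    case (Suc k)
    then show ?case
      using step(1) by blast
  qed
  show ?thesis
    using step(2)[OF F_finite] unfolding F_def H_eq by blast
qed

end
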